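(* Let $3\le p<n$, let $c\in\mathbb{R}^A$, let $s\in V\setminus\{n\}$, $t\in V\setminus\{0\}$ with $s\neq t$, and let $R\subseteq V\setminus\{s,t,0,n\}$ with $|R|\ge 2$. Suppose that one of the conditions (i)–(iv) below holds, and that $c_{ij}=\beta$ for all arcs $(i,j)$ of some unbalanced 1-tree $H$ on $R$. Then $c_{ij}=\beta$ for all $(i,j)\in A(R)$, and there are $\sigma,\tau$ with $c_{si}=\sigma$ and $c_{it}=\tau$ for all $i\in R$. Conditions: (i) $|R|\ge 5$ and $c_{ik}+c_{kj}=c_{il}+c_{lj}$ for all distinct $i\in R\cup\{s\}$, $j\in R\cup\{t\}$, $k,l\in R$; (ii) $|R|\ge p\ge 4$ and $c(P)$ is constant over all simple directed $(s,t)$-paths with $p$ arcs whose internal nodes lie in $R$; (iii) $|R|=p-1$, $c(P)$ is constant over all simple directed $(s,t)$-paths with $p$ arcs whose internal nodes are exactly the nodes of $R$, and for some $2\le r<p$, $c(P)$ is constant over all simple directed $(s,t)$-paths with $r$ arcs whose $r-1$ internal nodes lie in $R$; (iv) $p=3$, $|R|\ge3$, $c(P)$ is constant over all simple directed $(s,t)$-paths with 3 arcs whose internal nodes lie in $R$, and $c(P)$ is constant over all simple directed $(s,t)$-paths with 2 arcs whose inner node lies in $R$.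
   Context: Let $n$ be a positive integer, $V=\{0,1,\dots,n\}$, and let $D=(V,A)$ be the digraph whose arc set $A$ consists of all ordered pairs $(i,j)$ with $i\neq j$, $i,j\in V$, except that no arc enters node $0$, no arc leaves node $n$, and the arc $(0,n)$ is absent. $c(P)=\sum_{(i,j)\in P}c_{ij}$; $A(R)$ is the set of arcs of $A$ with both endnodes in $R$. A balanced cycle is a simple cycle of the underlying undirected graph (arcs traversed in either direction) that contains the same number of forward and backward arcs. An unbalanced 1-tree on $R$ is a set of arcs of $A(R)$ consisting of a spanning tree $T$ of $R$ (ignoring orientations) plus one further arc $(k,l)$ whose fundamental cycle with respect to $T$ is not balanced. *)

theory Defs
  imports Complex_Main
begin

definition arcs :: "nat \<Rightarrow> (nat \<times> nat) set" where
  "arcs n = {(i,j). i \<le> n \<and> j \<le> n \<and> i \<noteq> j \<and> j \<noteq> 0 \<and> i \<noteq> n \<and> (i,j) \<noteq> (0,n)}"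

definition arcs_in :: "nat \<Rightarrow> nat set \<Rightarrow> (nat \<times> nat) set" where
  "arcs_in n R = {(i,j) \<in> arcs n. i \<in> R \<and> j \<in> R}"

definition steps :: "'a list \<Rightarrow> ('a \<times> 'a) list" where
  "steps xs = zip xs (tl xs)"

definition spanning_tree :: "nat \<Rightarrow> nat set \<Rightarrow> (nat \<times> nat) set \<Rightarrow> bool" where
  "spanning_tree n R T \<longleftrightarrow> T \<subseteq> arcs_in n R \<and> finite R \<and> card T + 1 = card R \<and>
     (\<forall>u\<in>R. \<forall>v\<in>R. (u,v) \<in> (T \<union> T\<inverse>)\<^sup>*)"

definition tree_path :: "(nat \<times> nat) set \<Rightarrow> nat \<Rightarrow> nat \<Rightarrow> nat list \<Rightarrow> bool" where
  "tree_path T k l xs \<longleftrightarrow> xs \<noteq> [] \<and> hd xs = k \<and> last xs = l \<and> distinct xs \<and>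
     (\<forall>e\<in>set (steps xs). e \<in> T \<union> T\<inverse>)"

text \<open>Unbalanced 1-tree on R: spanning tree T plus an arc (k,l) of A(R) whose fundamental
  cycle (tree path k..l followed by arc (k,l) traversed from l back to k, i.e. backward)
  has different numbers of forward and backward arcs.\<close>
definition unbalanced_1tree :: "nat \<Rightarrow> nat set \<Rightarrow> (nat \<times> nat) set \<Rightarrow> bool" where
  "unbalanced_1tree n R H \<longleftrightarrow> (\<exists>T k l xs. spanning_tree n R T \<and> (k,l) \<in> arcs_in n R \<and>
     (k,l) \<notin> T \<and> H = insert (k,l) T \<and> tree_path T k l xs \<and>
     length (filter (\<lambda>e. e \<in> T) (steps xs)) \<noteq>
       length (filter (\<lambda>(a,b). (b,a) \<in> T) (steps xs)) + 1)"

definition dipath :: "nat \<Rightarrow> nat \<Rightarrow> nat \<Rightarrow> nat \<Rightarrow> nat list \<Rightarrow> bool" where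
  "dipath n s t m xs \<longleftrightarrow> length xs = m + 1 \<and> hd xs = s \<and> last xs = t \<and> distinct xs \<and>
     set (steps xs) \<subseteq> arcs n"

definition internal :: "'a list \<Rightarrow> 'a set" where
  "internal xs = set (butlast (tl xs))"

definition cost :: "(nat \<Rightarrow> nat \<Rightarrow> real) \<Rightarrow> nat list \<Rightarrow> real" where
  "cost c xs = sum_list (map (\<lambda>(i,j). c i j) (steps xs))"

definition const_paths :: "nat \<Rightarrow> (nat \<Rightarrow> nat \<Rightarrow> real) \<Rightarrow> nat \<Rightarrow> nat \<Rightarrow> nat \<Rightarrow> nat set \<Rightarrow> bool" where
  "const_paths n c s t m R \<longleftrightarrow> (\<forall>P Q. dipath n s t m P \<and> internal P \<subseteq> R \<and>
      dipath n s t m Q \<and> internal Q \<subseteq> R \<longrightarrow> cost c P = cost c Q)"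

definition const_paths_exact :: "nat \<Rightarrow> (nat \<Rightarrow> nat \<Rightarrow> real) \<Rightarrow> nat \<Rightarrow> nat \<Rightarrow> nat \<Rightarrow> nat set \<Rightarrow> bool" where
  "const_paths_exact n c s t m R \<longleftrightarrow> (\<forall>P Q. dipath n s t m P \<and> internal P = R \<and>
      dipath n s t m Q \<and> internal Q = R \<longrightarrow> cost c P = cost c Q)"

end

(*
  Each of the conditions (i)-(iv) is exploited by comparing (s,t)-paths that differ only in
  one or two nodes of R. This shows that the costs inside R are potential costs
  c i j = \<gamma> + a i - a j, and that c s i and c i t do not depend on i once the costs inside R
  are constant.

  If c = \<beta> on an unbalanced 1-tree T + (k,l), then a u - a v = \<beta> - \<gamma> on every arc of T
  and on (k,l). Telescoping a along the tree path from k to l gives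
  a k - a l = (\<beta> - \<gamma>) * (#forward - #backward arcs), and unbalancedness says that this
  multiplier is not 1. Hence \<beta> = \<gamma>, so a is constant on the spanning tree, and c = \<beta> on A(R).
*)
theory Submission
  imports Defs
begin

definition proper_terminals :: "nat \<Rightarrow> nat \<Rightarrow> nat \<Rightarrow> nat set \<Rightarrow> bool" where
  "proper_terminals n s t R \<longleftrightarrow> s < n \<and> 0 < t \<and> t \<le> n \<and> s \<noteq> t \<and> R \<subseteq> {1..<n} - {s, t}"

lemma proper_terminalsD:
  assumes "proper_terminals n s t R" shows "finite R" "s \<notin> R" "t \<notin> R"
  using assms finite_subset unfolding proper_terminals_def by auto

lemma ex_in_diff_if_card_less: "finite F \<Longrightarrow> card F < card R \<Longrightarrow> \<exists>w\<in>R. w \<notin> F"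
  by (meson card_mono not_le subsetI)

lemma obtain_distinct_list_outside:
  assumes "finite R" "U \<subseteq> R" "m + card U \<le> card R"
  obtains F where "distinct F" "set F \<subseteq> R - U" "length F = m"
proof -
  have "m \<le> card (R - U)" using assms by (simp add: card_Diff_subset finite_subset)
  then obtain F0 where "F0 \<subseteq> R - U" "card F0 = m" "finite F0" by (rule obtain_subset_with_card_n)
  then show thesis using that finite_distinct_list[of F0] distinct_card by metis
qed

lemma steps_simps [simp]:
  "steps [] = []" "steps [a] = []" "steps (a # b # xs) = (a, b) # steps (b # xs)"
  by (simp_all add: steps_def)

lemma steps_Cons_snoc: "L \<noteq> [] \<Longrightarrow> steps (s # L @ [t]) = (s, hd L) # steps L @ [(last L, t)]"
  by (induction L arbitrary: s rule: induct_list012) auto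

lemma in_set_steps:
  "(a, b) \<in> set (steps xs) \<Longrightarrow> a \<in> set xs \<and> b \<in> set xs \<and> (distinct xs \<longrightarrow> a \<noteq> b)"
  by (induction xs rule: induct_list012) auto

lemma cost_simps [simp]: "cost c [a] = 0" "cost c (a # b # xs) = c a b + cost c (b # xs)"
  by (simp_all add: cost_def)

lemma cost_append:
  "xs \<noteq> [] \<Longrightarrow> ys \<noteq> [] \<Longrightarrow> cost c (xs @ ys) = cost c xs + c (last xs) (hd ys) + cost c ys"
  by (induction xs rule: induct_list012) (auto simp: neq_Nil_conv)

lemma cost_Cons_snoc: "L \<noteq> [] \<Longrightarrow> cost c (s # L @ [t]) = c s (hd L) + cost c L + c (last L) t"
  using cost_append[of "s # L" "[t]" c] by (cases L) auto

lemma cost_const: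
  assumes "distinct L" "set L \<subseteq> R" "\<forall>i\<in>R. \<forall>j\<in>R. i \<noteq> j \<longrightarrow> c i j = \<beta>"
  shows "cost c L = \<beta> * real (length L - 1)"
  using assms(1,2)
proof (induction L rule: induct_list012)
  case (3 x y zs)
  then show ?case using assms(3) by (auto simp: algebra_simps)
qed (simp_all add: cost_def)

lemma dipath_through:
  assumes "proper_terminals n s t R" "distinct L" "set L \<subseteq> R" "L \<noteq> []"
  shows "dipath n s t (length L + 1) (s # L @ [t])"
proof -
  have "a \<in> R \<and> b \<in> R \<and> a \<noteq> b" if "(a, b) \<in> set (steps L)" for a b
    using in_set_steps[OF that] assms(2,3) by auto
  moreover have "hd L \<in> R" "last L \<in> R" using assms(3,4) by auto
  ultimately have "set (steps (s # L @ [t])) \<subseteq> arcs n"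
    using assms(1,4) unfolding steps_Cons_snoc[OF assms(4)] proper_terminals_def arcs_def by fastforce
  moreover have "distinct (s # L @ [t])" using assms unfolding proper_terminals_def by auto
  ultimately show ?thesis by (simp add: dipath_def)
qed

lemma const_paths_cost_eq:
  assumes "const_paths n c s t m R" "proper_terminals n s t R"
    and "distinct L" "set L \<subseteq> R" "L \<noteq> []" "length L + 1 = m"
    and "distinct L'" "set L' \<subseteq> R" "L' \<noteq> []" "length L' + 1 = m"
  shows "cost c (s # L @ [t]) = cost c (s # L' @ [t])"
proof -
  have "dipath n s t m (s # L @ [t])" "dipath n s t m (s # L' @ [t])"
    using dipath_through[OF assms(2-5)] dipath_through[OF assms(2,7-9)] assms(6,10) by simp_all
  then show ?thesis using assms(1,4,8) unfolding const_paths_def internal_def by simp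
qed

lemma const_paths_exact_cost_eq:
  assumes "const_paths_exact n c s t (card R + 1) R" "proper_terminals n s t R"
    and "distinct L" "set L = R" "L \<noteq> []" "distinct L'" "set L' = R"
  shows "cost c (s # L @ [t]) = cost c (s # L' @ [t])"
proof -
  have "L' \<noteq> []" using assms(4,5,7) by auto
  moreover have "length L = card R" "length L' = card R" using assms(3,4,6,7) distinct_card by metis+
  ultimately have "dipath n s t (card R + 1) (s # L @ [t])" "dipath n s t (card R + 1) (s # L' @ [t])"
    using dipath_through[OF assms(2,3)] dipath_through[OF assms(2,6)] assms(4,5,7) by auto
  then show ?thesis using assms(1,4,7) unfolding const_paths_exact_def internal_def by simp
qed

definition potential_costs :: "(nat \<Rightarrow> nat \<Rightarrow> real) \<Rightarrow> nat set \<Rightarrow> bool" where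
  "potential_costs c R \<longleftrightarrow> (\<exists>\<gamma> a. \<forall>i\<in>R. \<forall>j\<in>R. i \<noteq> j \<longrightarrow> c i j = \<gamma> + a i - a j)"

lemma potential_costsI:
  assumes two_cycles: "\<And>i j k. i \<in> R \<Longrightarrow> j \<in> R \<Longrightarrow> k \<in> R \<Longrightarrow> distinct [i, j, k] \<Longrightarrow>
      c i j + c j i = c i k + c k i"
    and triangles: "\<And>i j k. i \<in> R \<Longrightarrow> j \<in> R \<Longrightarrow> k \<in> R \<Longrightarrow> distinct [i, j, k] \<Longrightarrow>
      c i j + c j k + c k i = c i k + c k j + c j i"
  shows "potential_costs c R"
proof (cases "\<exists>x\<in>R. \<exists>y\<in>R. x \<noteq> y")
  case False
  then show ?thesis unfolding potential_costs_def by blast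
next
  case True
  then obtain x y where xy: "x \<in> R" "y \<in> R" "x \<noteq> y" by blast
  define \<gamma> where "\<gamma> = (c x y + c y x) / 2"
  have to_xy: "c x i + c i x = c x y + c y x" if "i \<in> R" "i \<noteq> x" for i
    using two_cycles[of x i y] that xy by (cases "i = y") auto
  have two_cycle: "c i j + c j i = 2 * \<gamma>" if ij: "i \<in> R" "j \<in> R" "i \<noteq> j" for i j
  proof (cases "x \<in> {i, j}")
    case True
    then show ?thesis using to_xy[of i] to_xy[of j] ij unfolding \<gamma>_def by auto
  next
    case False
    then show ?thesis
      using two_cycles[of i j x] to_xy[of i] ij xy unfolding \<gamma>_def by auto
  qed
  define a where "a i = (if i = x then 0 else c i x - \<gamma>)" for i
  have "c i j = \<gamma> + a i - a j" if "i \<in> R" "j \<in> R" "i \<noteq> j" for i j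
  proof (cases "x \<in> {i, j}")
    case True
    then show ?thesis using two_cycle[of j x] that xy by (auto simp: a_def)
  next
    case False
    then show ?thesis
      using triangles[of i j x] two_cycle[of i j] two_cycle[of i x] two_cycle[of j x] that xy
      by (auto simp: a_def)
  qed
  then show ?thesis unfolding potential_costs_def by blast
qed

lemma potential_difference_along_path:
  fixes a :: "nat \<Rightarrow> real"
  assumes "set (steps xs) \<subseteq> T \<union> T\<inverse>" "\<forall>(u, v)\<in>T. a u - a v = \<delta>" "xs \<noteq> []"
  shows "a (hd xs) - a (last xs) = \<delta> * (real (length (filter (\<lambda>e. e \<in> T) (steps xs)))
           - real (length (filter (\<lambda>(u, v). (v, u) \<in> T) (steps xs))))"
  using assms(1,3)
proof (induction xs rule: induct_list012)
  case (3 x y zs)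
  have "(x, y) \<in> T \<Longrightarrow> a x - a y = \<delta>" "(y, x) \<in> T \<Longrightarrow> a y - a x = \<delta>"
    using assms(2) by auto
  then have "a x - a y = \<delta> * ((if (x, y) \<in> T then 1 else 0) - (if (y, x) \<in> T then 1 else 0))"
    using "3.prems"(1) by auto
  then show ?case using 3 by (auto simp: algebra_simps)
qed simp_all

lemma const_if_unbalanced_1tree:
  assumes "potential_costs c R" "unbalanced_1tree n R H" "\<forall>(i, j)\<in>H. c i j = \<beta>"
    and "i \<in> R" "j \<in> R" "i \<noteq> j"
  shows "c i j = \<beta>"
proof -
  obtain \<gamma> a where a: "\<forall>i\<in>R. \<forall>j\<in>R. i \<noteq> j \<longrightarrow> c i j = \<gamma> + a i - a j"
    using assms(1) unfolding potential_costs_def by blast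
  obtain T k l xs where T: "spanning_tree n R T" "(k, l) \<in> arcs_in n R" "H = insert (k, l) T"
      "tree_path T k l xs"
    and unbalanced: "length (filter (\<lambda>e. e \<in> T) (steps xs))
      \<noteq> length (filter (\<lambda>(u, v). (v, u) \<in> T) (steps xs)) + 1"
    using assms(2) unfolding unbalanced_1tree_def by blast
  have H_diff: "a u - a v = \<beta> - \<gamma>" if "(u, v) \<in> H" for u v
  proof -
    have "(u, v) \<in> arcs_in n R" using that T(1-3) unfolding spanning_tree_def by auto
    then show ?thesis using a assms(3) that by (fastforce simp: arcs_in_def arcs_def)
  qed
  have "a k - a l = (\<beta> - \<gamma>) * (real (length (filter (\<lambda>e. e \<in> T) (steps xs)))
           - real (length (filter (\<lambda>(u, v). (v, u) \<in> T) (steps xs))))"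
    using potential_difference_along_path[of xs T a "\<beta> - \<gamma>"] H_diff T(3,4)
    unfolding tree_path_def by auto
  moreover have "a k - a l = \<beta> - \<gamma>" using H_diff T(3) by simp
  ultimately have "(\<beta> - \<gamma>) * (real (length (filter (\<lambda>e. e \<in> T) (steps xs)))
           - real (length (filter (\<lambda>(u, v). (v, u) \<in> T) (steps xs))) - 1) = 0"
    by (simp add: algebra_simps)
  then have "\<beta> = \<gamma>" using unbalanced by simp
  then have T_level: "a u = a v" if "(u, v) \<in> T" for u v
    using H_diff T(3) that by simp
  have "a u = a v" if "(u, v) \<in> (T \<union> T\<inverse>)\<^sup>*" for u v
    using that by (induction rule: rtrancl_induct) (auto dest: T_level)
  then have "a i = a j" using T(1) assms(4,5) unfolding spanning_tree_def by blast
  then show ?thesis using a assms(4-6) \<open>\<beta> = \<gamma>\<close> by simp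
qed

definition midpoint_invariant :: "(nat \<Rightarrow> nat \<Rightarrow> real) \<Rightarrow> nat set \<Rightarrow> nat \<Rightarrow> nat \<Rightarrow> bool" where
  "midpoint_invariant c R i j \<longleftrightarrow>
     (\<forall>k\<in>R. \<forall>l\<in>R. distinct [i, j, k, l] \<longrightarrow> c i k + c k j = c i l + c l j)"

lemma potential_costs_if_midpoint_invariant:
  assumes inner: "\<forall>i\<in>R. \<forall>j\<in>R. midpoint_invariant c R i j"
    and source: "\<forall>j\<in>R. midpoint_invariant c R s j"
    and "s \<notin> R" "4 \<le> card R"
  shows "potential_costs c R"
proof -
  have "c x y + c y x = c x z + c z x \<and> c x y + c y z + c z x = c x z + c z y + c y x"
    if xyz: "x \<in> R" "y \<in> R" "z \<in> R" "distinct [x, y, z]" for x y z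
  proof -
    obtain w where w: "w \<in> R" "w \<notin> {x, y, z}"
      using ex_in_diff_if_card_less[of "{x, y, z}" R] xyz assms(4) by auto
    have mid: "c i k + c k j = c i l + c l j"
      if "i \<in> insert s R" "j \<in> R" "k \<in> R" "l \<in> R" "distinct [i, j, k, l]" for i j k l
      using inner source that unfolding midpoint_invariant_def by blast
    have "c x y + c y w = c x z + c z w" "c y w + c w x = c y z + c z x"
      "c x w + c w z = c x y + c y z" "c x w + c w y = c x z + c z y"
      "c z w + c w x = c z y + c y x" "c s w + c w y = c s x + c x y" "c s w + c w z = c s x + c x z"
      using mid[of x w y z] mid[of y x w z] mid[of x z w y] mid[of x y w z] mid[of z x w y]
        mid[of s y w x] mid[of s z w x] xyz w \<open>s \<notin> R\<close> by auto
    then show ?thesis by linarith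
  qed
  then show ?thesis by (intro potential_costsI) blast+
qed

lemma uniform_ends_if_midpoint_invariant:
  assumes source: "\<forall>j\<in>R. midpoint_invariant c R s j" and sink: "\<forall>i\<in>R. midpoint_invariant c R i t"
    and "s \<notin> R" "t \<notin> R" "3 \<le> card R"
    and const: "\<forall>i\<in>R. \<forall>j\<in>R. i \<noteq> j \<longrightarrow> c i j = \<beta>"
    and "x \<in> R" "y \<in> R"
  shows "c s x = c s y \<and> c x t = c y t"
proof (cases "x = y")
  case False
  have "card {x, y} < card R" using assms(5) False by simp
  then obtain w where w: "w \<in> R" "w \<notin> {x, y}" using ex_in_diff_if_card_less[of "{x, y}" R] by auto
  have "c s x + c x w = c s y + c y w" "c w x + c x t = c w y + c y t"
    using source[rule_format, of w] sink[rule_format, of w] w assms(3,4,7,8) False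
    unfolding midpoint_invariant_def by auto
  moreover have "c x w = \<beta>" "c y w = \<beta>" "c w x = \<beta>" "c w y = \<beta>"
    using const w assms(7,8) by auto
  ultimately show ?thesis by linarith
qed simp

definition rigid_costs :: "(nat \<Rightarrow> nat \<Rightarrow> real) \<Rightarrow> nat \<Rightarrow> nat \<Rightarrow> nat set \<Rightarrow> bool" where
  "rigid_costs c s t R \<longleftrightarrow> potential_costs c R \<and>
     (\<forall>\<beta>. (\<forall>i\<in>R. \<forall>j\<in>R. i \<noteq> j \<longrightarrow> c i j = \<beta>) \<longrightarrow> (\<forall>x\<in>R. \<forall>y\<in>R. c s x = c s y \<and> c x t = c y t))"

lemma rigid_costs_if_midpoint_invariant:
  assumes mid: "\<And>i j. i \<in> insert s R \<Longrightarrow> j \<in> insert t R \<Longrightarrow> (i, j) \<noteq> (s, t) \<Longrightarrow>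
      midpoint_invariant c R i j"
    and pt: "proper_terminals n s t R" and "4 \<le> card R"
  shows "rigid_costs c s t R"
proof -
  note R = proper_terminalsD(2,3)[OF pt]
  have inner: "\<forall>i\<in>R. \<forall>j\<in>R. midpoint_invariant c R i j"
    and source: "\<forall>j\<in>R. midpoint_invariant c R s j"
    and sink: "\<forall>i\<in>R. midpoint_invariant c R i t"
    using mid R by auto
  have "potential_costs c R" using potential_costs_if_midpoint_invariant[OF inner source R(1)] assms(3) .
  moreover have "c s x = c s y \<and> c x t = c y t"
    if "\<forall>i\<in>R. \<forall>j\<in>R. i \<noteq> j \<longrightarrow> c i j = \<beta>" "x \<in> R" "y \<in> R" for \<beta> x y
    using uniform_ends_if_midpoint_invariant[OF source sink R _ that] assms(3) by simp
  ultimately show ?thesis unfolding rigid_costs_def by blast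
qed

text \<open>Both lists are padded by the same unused nodes of R to give (s,t)-paths with q arcs:
  the padding goes after them for the first claim and before them for the second.\<close>
lemma const_paths_exchange:
  assumes cp: "const_paths n c s t q R" and pt: "proper_terminals n s t R"
    and X: "distinct X" "set X \<subseteq> R" "X \<noteq> []"
    and X': "distinct X'" "set X' \<subseteq> R" "length X' = length X"
    and size: "length X < q" "q \<le> card R" "card (set X \<union> set X') \<le> length X + 1"
  shows "last X' = last X \<Longrightarrow> cost c (s # X) = cost c (s # X')"
    and "hd X' = hd X \<Longrightarrow> cost c (X @ [t]) = cost c (X' @ [t])"
proof -
  have "set X \<union> set X' \<subseteq> R" "q - 1 - length X + card (set X \<union> set X') \<le> card R"
    using X(2) X'(2) size by auto
  then obtain F where F: "distinct F" "set F \<subseteq> R - (set X \<union> set X')" "length F = q - 1 - length X"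
    by (rule obtain_distinct_list_outside[OF proper_terminalsD(1)[OF pt]])
  have "X' \<noteq> []" using X(3) X'(3) by auto
  have "cost c (s # (X @ F) @ [t]) = cost c (s # (X' @ F) @ [t])"
    by (rule const_paths_cost_eq[OF cp pt]) (use X X' F size(1) \<open>X' \<noteq> []\<close> in auto)
  then show "cost c (s # X) = cost c (s # X')" if "last X' = last X"
    using that cost_append[of "s # X" "F @ [t]" c] cost_append[of "s # X'" "F @ [t]" c] X(3)
      \<open>X' \<noteq> []\<close> by simp
  have "cost c (s # (F @ X) @ [t]) = cost c (s # (F @ X') @ [t])"
    by (rule const_paths_cost_eq[OF cp pt]) (use X X' F size(1) \<open>X' \<noteq> []\<close> in auto)
  then show "cost c (X @ [t]) = cost c (X' @ [t])" if "hd X' = hd X"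
    using that cost_append[of "s # F" "X @ [t]" c] cost_append[of "s # F" "X' @ [t]" c] X(3)
      \<open>X' \<noteq> []\<close> by simp
qed

lemma midpoint_invariant_if_const_paths:
  assumes cp: "const_paths n c s t q R" and pt: "proper_terminals n s t R"
    and "4 \<le> q" "q \<le> card R" "i \<in> insert s R" "j \<in> insert t R" "(i, j) \<noteq> (s, t)"
  shows "midpoint_invariant c R i j"
  unfolding midpoint_invariant_def
proof (intro ballI impI)
  fix k l assume kl: "k \<in> R" "l \<in> R" "distinct [i, j, k, l]"
  note exchange = const_paths_exchange[OF cp pt]
  consider "i = s" "j \<in> R" | "i \<in> R" "j = t" | "i \<in> R" "j \<in> R" using assms(5-7) by auto
  then show "c i k + c k j = c i l + c l j"
  proof cases
    case 1
    then show ?thesis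
      using exchange(1)[of "[k, j]" "[l, j]"] kl assms(3,4) by (simp add: card_insert_if)
  next
    case 2
    then show ?thesis
      using exchange(2)[of "[i, k]" "[i, l]"] kl assms(3,4) by (simp add: card_insert_if)
  next
    case 3
    then show ?thesis
      using exchange(1)[of "[i, k, j]" "[i, l, j]"] kl assms(3,4) by (simp add: card_insert_if)
  qed
qed

lemma rigid_costs_if_const_paths:
  assumes cp: "const_paths n c s t q R" and pt: "proper_terminals n s t R"
    and "4 \<le> q" "q \<le> card R"
  shows "rigid_costs c s t R"
  using rigid_costs_if_midpoint_invariant[OF midpoint_invariant_if_const_paths[OF cp pt assms(3,4)] pt]
    assms(3,4) by simp

lemma three_arc_cost_eq:
  assumes "const_paths n c s t 3 R" "proper_terminals n s t R"
    and "a \<in> R" "b \<in> R" "a \<noteq> b" "a' \<in> R" "b' \<in> R" "a' \<noteq> b'"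
  shows "c s a + c a b + c b t = c s a' + c a' b' + c b' t"
  using const_paths_cost_eq[OF assms(1,2), of "[a, b]" "[a', b']"] assms(3-8) by simp

lemma two_arc_cost_eq:
  assumes "const_paths n c s t 2 R" "proper_terminals n s t R" "a \<in> R" "a' \<in> R"
  shows "c s a + c a t = c s a' + c a' t"
  using const_paths_cost_eq[OF assms(1,2), of "[a]" "[a']"] assms(3,4) by simp

lemma midpoint_invariant_if_three_arc:
  assumes "const_paths n c s t 3 R" "proper_terminals n s t R"
  shows "j \<in> R \<Longrightarrow> midpoint_invariant c R s j" and "i \<in> R \<Longrightarrow> midpoint_invariant c R i t"
  using three_arc_cost_eq[OF assms] unfolding midpoint_invariant_def by force+

lemma potential_costs_if_three_arc:
  assumes "const_paths n c s t 3 R" "proper_terminals n s t R"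
    and two_arc: "\<And>a a'. a \<in> R \<Longrightarrow> a' \<in> R \<Longrightarrow> c s a + c a t = c s a' + c a' t"
  shows "potential_costs c R"
proof (cases "\<exists>x\<in>R. \<exists>y\<in>R. x \<noteq> y")
  case False
  then show ?thesis unfolding potential_costs_def by blast
next
  case True
  then obtain x y where xy: "x \<in> R" "y \<in> R" "x \<noteq> y" by blast
  have "\<forall>i\<in>R. \<forall>j\<in>R. i \<noteq> j \<longrightarrow>
      c i j = (c s x + c x y + c y t) - (c s x + c x t) + c i t - c j t"
    using three_arc_cost_eq[OF assms(1,2) _ _ _ xy] two_arc[OF _ xy(1)] by fastforce
  then show ?thesis unfolding potential_costs_def by (intro exI)
qed

lemma rigid_costs_if_three_arc:
  assumes "const_paths n c s t 3 R" "proper_terminals n s t R" "3 \<le> card R"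
    and "\<And>a a'. a \<in> R \<Longrightarrow> a' \<in> R \<Longrightarrow> c s a + c a t = c s a' + c a' t"
  shows "rigid_costs c s t R"
  using potential_costs_if_three_arc[OF assms(1,2,4)]
    uniform_ends_if_midpoint_invariant[OF _ _ proper_terminalsD(2,3)[OF assms(2)] assms(3)]
    midpoint_invariant_if_three_arc[OF assms(1,2)]
  unfolding rigid_costs_def by blast

lemma hamiltonian_swap:
  assumes exact: "const_paths_exact n c s t (card R + 1) R" and pt: "proper_terminals n s t R"
    and "x \<in> R" "y \<in> R" "w \<in> R" "distinct [x, y, w]"
  shows "c s x + c x y + c y w = c s y + c y x + c x w"
    and "c w x + c x y + c y t = c w y + c y x + c x t"
proof -
  obtain W where W: "set W = R - {x, y, w}" "distinct W"
    using finite_distinct_list[of "R - {x, y, w}"] proper_terminalsD(1)[OF pt] by auto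
  have "cost c (s # (x # y # w # W) @ [t]) = cost c (s # (y # x # w # W) @ [t])"
    by (rule const_paths_exact_cost_eq[OF exact pt]) (use W assms(3-6) in auto)
  then show "c s x + c x y + c y w = c s y + c y x + c x w" by simp
  have "cost c (s # (W @ [w, x, y]) @ [t]) = cost c (s # (W @ [w, y, x]) @ [t])"
    by (rule const_paths_exact_cost_eq[OF exact pt]) (use W assms(3-6) in auto)
  then show "c w x + c x y + c y t = c w y + c y x + c x t"
    using cost_append[of "s # W" "[w, x, y, t]" c] cost_append[of "s # W" "[w, y, x, t]" c] by simp
qed

lemma two_arc_if_three_arc_hamiltonian:
  assumes "const_paths n c s t 3 R" "const_paths_exact n c s t (card R + 1) R"
    and pt: "proper_terminals n s t R" and "3 \<le> card R" "x \<in> R" "y \<in> R"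
  shows "c s x + c x t = c s y + c y t"
proof (cases "x = y")
  case False
  have "card {x, y} < card R" using assms(4) False by simp
  then obtain w where w: "w \<in> R" "w \<notin> {x, y}"
    using ex_in_diff_if_card_less[of "{x, y}" R] by auto
  note three_arc = three_arc_cost_eq[OF assms(1) pt]
  show ?thesis
    using hamiltonian_swap(1)[OF assms(2) pt assms(5,6) w(1)] three_arc[of x y y w]
      three_arc[of y x y w] three_arc[of x w y w] assms(5,6) w False
    by simp
qed simp

lemma potential_costs_if_hamiltonian:
  assumes exact: "const_paths_exact n c s t (card R + 1) R" and pt: "proper_terminals n s t R"
    and two_arc: "\<And>a a'. a \<in> R \<Longrightarrow> a' \<in> R \<Longrightarrow> c s a + c a t = c s a' + c a' t"
  shows "potential_costs c R"
proof -
  have "c x y + c y x = c x z + c z x \<and> c x y + c y z + c z x = c x z + c z y + c y x"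
    if xyz: "x \<in> R" "y \<in> R" "z \<in> R" "distinct [x, y, z]" for x y z
  proof -
    note swap = hamiltonian_swap[OF exact pt]
    have "c z x + c x y + c y t = c z y + c y x + c x t" "c y x + c x z + c z t = c y z + c z x + c x t"
      "c s x + c x z + c z y = c s z + c z x + c x y" "c s x + c x y + c y z = c s y + c y x + c x z"
      "c s y + c y z + c z x = c s z + c z y + c y x"
      using swap(2)[of x y z] swap(2)[of x z y] swap(1)[of x z y] swap(1)[of x y z] swap(1)[of y z x] xyz
      by auto
    moreover have "c s x + c x t = c s y + c y t" "c s x + c x t = c s z + c z t"
      using two_arc xyz by blast+
    ultimately show ?thesis by linarith
  qed
  then show ?thesis by (intro potential_costsI) blast+
qed

lemma uniform_ends_if_hamiltonian:
  assumes exact: "const_paths_exact n c s t (card R + 1) R" and pt: "proper_terminals n s t R"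
    and two_arc: "\<And>a a'. a \<in> R \<Longrightarrow> a' \<in> R \<Longrightarrow> c s a + c a t = c s a' + c a' t"
    and const: "\<forall>i\<in>R. \<forall>j\<in>R. i \<noteq> j \<longrightarrow> c i j = \<beta>"
    and "x \<in> R" "y \<in> R"
  shows "c s x = c s y \<and> c x t = c y t"
proof (cases "x = y")
  case False
  obtain W where W: "set W = R - {x, y}" "distinct W"
    using finite_distinct_list[of "R - {x, y}"] proper_terminalsD(1)[OF pt] by auto
  define L where "L = x # W @ [y]"
  define L' where "L' = y # W @ [x]"
  have L: "distinct L" "set L = R" "distinct L'" "set L' = R"
    using W assms(5,6) False unfolding L_def L'_def by auto
  then have "cost c L = cost c L'"
    using cost_const[OF _ _ const] by (simp add: L_def L'_def)
  moreover have "cost c (s # L @ [t]) = cost c (s # L' @ [t])"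
    using const_paths_exact_cost_eq[OF exact pt L(1,2) _ L(3,4)] by (simp add: L_def)
  ultimately have "c s x + c y t = c s y + c x t"
    using cost_Cons_snoc[of L c s t] cost_Cons_snoc[of L' c s t] by (simp add: L_def L'_def)
  then show ?thesis using two_arc[OF assms(5,6)] by linarith
qed simp

lemma rigid_costs_if_hamiltonian:
  assumes "const_paths_exact n c s t (card R + 1) R" "proper_terminals n s t R"
    and "\<And>a a'. a \<in> R \<Longrightarrow> a' \<in> R \<Longrightarrow> c s a + c a t = c s a' + c a' t"
  shows "rigid_costs c s t R"
  using potential_costs_if_hamiltonian[OF assms] uniform_ends_if_hamiltonian[OF assms]
  unfolding rigid_costs_def by blast

lemma rigid_costs_if_hamiltonian_and_short_paths:
  assumes pt: "proper_terminals n s t R" and exact: "const_paths_exact n c s t (card R + 1) R"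
    and "2 \<le> r" "r \<le> card R" and short: "const_paths n c s t r R"
  shows "rigid_costs c s t R"
proof -
  consider "4 \<le> r" | "r = 3" | "r = 2" using assms(3) by linarith
  then show ?thesis
  proof cases
    case 1
    then show ?thesis using rigid_costs_if_const_paths[OF short pt _ assms(4)] by blast
  next
    case 2
    then have "const_paths n c s t 3 R" "3 \<le> card R" using short assms(4) by simp_all
    then show ?thesis
      using rigid_costs_if_three_arc[OF _ pt] two_arc_if_three_arc_hamiltonian[OF _ exact pt] by blast
  next
    case 3
    then have "const_paths n c s t 2 R" using short by simp
    then show ?thesis using rigid_costs_if_hamiltonian[OF exact pt] two_arc_cost_eq[OF _ pt] by blast
  qed
qed

theorem corollary5:
  fixes n p s t :: nat and c :: "nat \<Rightarrow> nat \<Rightarrow> real" and R :: "nat set" and \<beta> :: real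
  assumes "3 \<le> p" "p < n"
    and "s \<le> n" "s \<noteq> n" "t \<le> n" "t \<noteq> 0" "s \<noteq> t"
    and "R \<subseteq> {0..n} - {s, t, 0, n}" "card R \<ge> 2"
    and conds:
      "(card R \<ge> 5 \<and> (\<forall>i\<in>R \<union> {s}. \<forall>j\<in>R \<union> {t}. \<forall>k\<in>R. \<forall>l\<in>R.
            distinct [i, j, k, l] \<longrightarrow> c i k + c k j = c i l + c l j))
       \<or> (card R \<ge> p \<and> p \<ge> 4 \<and> const_paths n c s t p R)
       \<or> (card R = p - 1 \<and> const_paths_exact n c s t p R \<and>
            (\<exists>r. 2 \<le> r \<and> r < p \<and> const_paths n c s t r R))
       \<or> (p = 3 \<and> card R \<ge> 3 \<and> const_paths n c s t 3 R \<and> const_paths n c s t 2 R)"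
    and H: "\<exists>H. unbalanced_1tree n R H \<and> (\<forall>(i,j)\<in>H. c i j = \<beta>)"
  shows "(\<forall>(i,j)\<in>arcs_in n R. c i j = \<beta>) \<and> (\<exists>\<sigma> \<tau>. \<forall>i\<in>R. c s i = \<sigma> \<and> c i t = \<tau>)"
proof -
  have pt: "proper_terminals n s t R" using assms(3-8) unfolding proper_terminals_def by auto
  have "rigid_costs c s t R"
    using conds
  proof (elim disjE conjE exE)
    assume "5 \<le> card R" and mid: "\<forall>i\<in>R \<union> {s}. \<forall>j\<in>R \<union> {t}. \<forall>k\<in>R. \<forall>l\<in>R.
      distinct [i, j, k, l] \<longrightarrow> c i k + c k j = c i l + c l j"
    have "midpoint_invariant c R i j" if "i \<in> insert s R" "j \<in> insert t R" for i j
      using mid that unfolding midpoint_invariant_def by blast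
    then show ?thesis using rigid_costs_if_midpoint_invariant[OF _ pt] \<open>5 \<le> card R\<close> by simp
  next
    assume "p \<le> card R" "4 \<le> p" "const_paths n c s t p R"
    then show ?thesis using rigid_costs_if_const_paths[OF _ pt] by blast
  next
    fix r assume "card R = p - 1" "const_paths_exact n c s t p R" "2 \<le> r" "r < p"
      "const_paths n c s t r R"
    moreover have "card R + 1 = p" using \<open>card R = p - 1\<close> assms(1) by simp
    ultimately show ?thesis
      using rigid_costs_if_hamiltonian_and_short_paths[OF pt, of c r] by simp
  next
    assume "p = 3" "3 \<le> card R" "const_paths n c s t 3 R" "const_paths n c s t 2 R"
    then show ?thesis using rigid_costs_if_three_arc[OF _ pt] two_arc_cost_eq[OF _ pt] by blast
  qed
  then have const: "\<forall>i\<in>R. \<forall>j\<in>R. i \<noteq> j \<longrightarrow> c i j = \<beta>"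
    using const_if_unbalanced_1tree H unfolding rigid_costs_def by blast
  then have "\<forall>x\<in>R. \<forall>y\<in>R. c s x = c s y \<and> c x t = c y t"
    using \<open>rigid_costs c s t R\<close> unfolding rigid_costs_def by blast
  moreover obtain x where "x \<in> R" using assms(9) by fastforce
  ultimately have "\<forall>i\<in>R. c s i = c s x \<and> c i t = c x t" by blast
  then show ?thesis using const by (auto simp: arcs_in_def arcs_def)
qed

end
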